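(* Let $r_1,r_2\ge 2$ and let $q_1,q_2\ge1$ be integers with $\gcd(q_1,r_2)=1$ and $\gcd(q_2,r_1)=1$. If $P=(P_1,P_2)=\sum_{\delta\in\mathbb{N}}(c_{1,\delta},c_{2,\delta})\binom{X}{\delta}\in(\mathbb{Z}_{r_1}\times\mathbb{Z}_{r_2})\binom{X}{\mathbb{Z}}$ is $q_1q_2$-periodic, then $$\check P:=(P_1(X_1),P_2(X_2))=\sum_{\delta}(c_{1,\delta},0)\binom{X_1}{\delta}+\sum_\delta(0,c_{2,\delta})\binom{X_2}{\delta}$$ is $(q_1,q_2)$-periodic, and $P\mapsto\check P$ is a ring isomorphism $$(\mathbb{Z}_{r_1}\times\mathbb{Z}_{r_2})\binom{X}{\mathbb{Z}_{q_1q_2}}\longrightarrow(\mathbb{Z}_{r_1}\times\mathbb{Z}_{r_2})\binom{X_1,X_2}{\mathbb{Z}_{q_1}\times\mathbb{Z}_{q_2}}$$ whose inverse is $Q\mapsto Q|_{X_1:=X,\,X_2:=X}$. If moreover $\gcd(q_1,q_2)=1$ and $\vartheta:\mathbb{Z}_{q_1q_2}\to\mathbb{Z}_{q_1}\times\mathbb{Z}_{q_2}$, $x+q_1q_2\mathbb{Z}\mapsto(x+q_1\mathbb{Z},x+q_2\mathbb{Z})$, then as maps $\check P=P\circ\vartheta^{-1}$ and $Q|_{X_1:=X,X_2:=X}=Q\circ\vartheta$.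
   Context: Notation: $\mathbb{Z}_r=\mathbb{Z}/r\mathbb{Z}$. $\binom{X}{\delta}=X(X-1)\cdots(X-\delta+1)/\delta!$, $\binom{X}{0}=1$. For $r\ge0$, $\mathbb{Z}\binom{X_1,\dots,X_n}{\mathbb{Z}^n}$ is the ring of integer linear combinations of products $\prod_j\binom{X_j}{\delta_j}$ (a subring of $\mathbb{Q}[X_1,\dots,X_n]$), and $\mathbb{Z}_r\binom{X_1,\dots,X_n}{\mathbb{Z}^n}$ is the quotient ring $\mathbb{Z}\binom{X_1,\dots,X_n}{\mathbb{Z}^n}/r\mathbb{Z}\binom{X_1,\dots,X_n}{\mathbb{Z}^n}$, i.e. formal sums $\sum_\delta P_\delta\prod_j\binom{X_j}{\delta_j}$ with $P_\delta\in\mathbb{Z}_r$, evaluated at integer points with values in $\mathbb{Z}_r$. For $B=\mathbb{Z}_{r_1}\times\mathbb{Z}_{r_2}$, $B$-polyfracts are pairs of such polyfracts with componentwise ring operations. For positive integers $q_j$, $B\binom{X_1,\dots,X_n}{\mathbb{Z}_{q_1}\times\cdots\times\mathbb{Z}_{q_n}}$ is the subring of those polyfracts whose evaluation map on $\mathbb{Z}^n$ is $q_j$-periodic in the $j$-th variable for each $j$ (such maps are identified with maps on $\mathbb{Z}_{q_1}\times\cdots\times\mathbb{Z}_{q_n}$). *)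

theory Defs
  imports "HOL-Computational_Algebra.Polynomial"
begin

text \<open>Polyfracts are represented by rational polynomials (Z-binomial polyfracts are a
subring of Q[X]); bivariate ones live in Q[X1][X2] = rat poly poly, where the inner
variable is X1 and the outer variable is X2. Elements of the quotient ring
Z_r binom(...) are represented by representatives, with congruence modulo r.\<close>

definition binpoly :: "nat \<Rightarrow> rat poly" where
  "binpoly d = smult (1 / fact d) (\<Prod>i<d. [:- of_nat i, 1:])"

definition binpoly2 :: "nat \<Rightarrow> nat \<Rightarrow> rat poly poly" where
  "binpoly2 a b = [:binpoly a:] * map_poly (\<lambda>u. [:u:]) (binpoly b)"

definition Zbinom1 :: "rat poly set" where
  "Zbinom1 = {f. \<exists>(c::nat \<Rightarrow> int) N. f = (\<Sum>d<N. smult (of_int (c d)) (binpoly d))}"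

definition Zbinom2 :: "rat poly poly set" where
  "Zbinom2 = {F. \<exists>(c::nat \<Rightarrow> nat \<Rightarrow> int) N.
      F = (\<Sum>a<N. \<Sum>b<N. smult [:of_int (c a b):] (binpoly2 a b))}"

definition cong1 :: "int \<Rightarrow> rat poly \<Rightarrow> rat poly \<Rightarrow> bool" where
  "cong1 r f g \<longleftrightarrow> smult (1 / of_int r) (f - g) \<in> Zbinom1"

definition cong2 :: "int \<Rightarrow> rat poly poly \<Rightarrow> rat poly poly \<Rightarrow> bool" where
  "cong2 r F G \<longleftrightarrow> smult [:1 / of_int r:] (F - G) \<in> Zbinom2"

definition ev1 :: "rat poly \<Rightarrow> int \<Rightarrow> rat" where
  "ev1 f x = poly f (of_int x)"

definition ev2 :: "rat poly poly \<Rightarrow> int \<Rightarrow> int \<Rightarrow> rat" where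
  "ev2 F x1 x2 = poly (poly F [:of_int x2:]) (of_int x1)"

definition vcong :: "int \<Rightarrow> rat \<Rightarrow> rat \<Rightarrow> bool" where
  "vcong r a b \<longleftrightarrow> (a - b) / of_int r \<in> \<int>"

definition per1 :: "int \<Rightarrow> int \<Rightarrow> rat poly \<Rightarrow> bool" where
  "per1 r q f \<longleftrightarrow> (\<forall>x. vcong r (ev1 f (x + q)) (ev1 f x))"

definition per2 :: "int \<Rightarrow> int \<Rightarrow> int \<Rightarrow> rat poly poly \<Rightarrow> bool" where
  "per2 r q1 q2 F \<longleftrightarrow>
     (\<forall>x1 x2. vcong r (ev2 F (x1 + q1) x2) (ev2 F x1 x2)
            \<and> vcong r (ev2 F x1 (x2 + q2)) (ev2 F x1 x2))"

text \<open>(Z_r1 x Z_r2) binom(X, Z_q) and (Z_r1 x Z_r2) binom(X1,X2, Z_q1 x Z_q2), as sets of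
representatives\<close>
definition dom1 :: "int \<Rightarrow> int \<Rightarrow> int \<Rightarrow> (rat poly \<times> rat poly) set" where
  "dom1 r1 r2 q = {(P1, P2). P1 \<in> Zbinom1 \<and> P2 \<in> Zbinom1 \<and> per1 r1 q P1 \<and> per1 r2 q P2}"

definition dom2 :: "int \<Rightarrow> int \<Rightarrow> int \<Rightarrow> int \<Rightarrow> (rat poly poly \<times> rat poly poly) set" where
  "dom2 r1 r2 q1 q2 = {(Q1, Q2). Q1 \<in> Zbinom2 \<and> Q2 \<in> Zbinom2
       \<and> per2 r1 q1 q2 Q1 \<and> per2 r2 q1 q2 Q2}"

definition Bcong1 :: "int \<Rightarrow> int \<Rightarrow> rat poly \<times> rat poly \<Rightarrow> rat poly \<times> rat poly \<Rightarrow> bool" where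
  "Bcong1 r1 r2 P P' \<longleftrightarrow> cong1 r1 (fst P) (fst P') \<and> cong1 r2 (snd P) (snd P')"

definition Bcong2 :: "int \<Rightarrow> int \<Rightarrow> rat poly poly \<times> rat poly poly
    \<Rightarrow> rat poly poly \<times> rat poly poly \<Rightarrow> bool" where
  "Bcong2 r1 r2 Q Q' \<longleftrightarrow> cong2 r1 (fst Q) (fst Q') \<and> cong2 r2 (snd Q) (snd Q')"

definition padd :: "'a::plus \<times> 'b::plus \<Rightarrow> 'a \<times> 'b \<Rightarrow> 'a \<times> 'b" where
  "padd P P' = (fst P + fst P', snd P + snd P')"

definition pmul :: "'a::times \<times> 'b::times \<Rightarrow> 'a \<times> 'b \<Rightarrow> 'a \<times> 'b" where
  "pmul P P' = (fst P * fst P', snd P * snd P')"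

text \<open>P |-> (P1(X1), P2(X2))\<close>
definition check :: "rat poly \<times> rat poly \<Rightarrow> rat poly poly \<times> rat poly poly" where
  "check P = ([:fst P:], map_poly (\<lambda>u. [:u:]) (snd P))"

text \<open>Q |-> Q|_{X1:=X, X2:=X}\<close>
definition restr :: "rat poly poly \<times> rat poly poly \<Rightarrow> rat poly \<times> rat poly" where
  "restr Q = (poly (fst Q) [:0, 1:], poly (snd Q) [:0, 1:])"

end

theory Submission
  imports Defs "HOL-Number_Theory.Cong"
begin

text \<open>By Newton interpolation with forward differences, the \<open>\<int>\<close>-binomial polyfracts are exactly
  the rational polynomials that are integer-valued on \<open>\<int>\<close> (resp. \<open>\<int>\<^sup>2\<close>), so congruence of
  polyfracts modulo \<open>r\<close> is congruence of their values, and every claim becomes a statement about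
  value functions. The one substantial point is that an integer-valued polynomial which is
  \<open>m h\<close>-periodic modulo \<open>r\<close>, with \<open>m\<close> coprime to \<open>r\<close>, is already \<open>h\<close>-periodic modulo \<open>r\<close>.
  Hence \<open>P\<^sub>1\<close> is \<open>q\<^sub>1\<close>-periodic and \<open>P\<^sub>2\<close> is \<open>q\<^sub>2\<close>-periodic modulo \<open>r\<^sub>1\<close>, \<open>r\<^sub>2\<close>, and for
  \<open>Q\<close> in the target, \<open>Q\<^sub>1\<close> (being \<open>q\<^sub>2\<close>-periodic in \<open>X\<^sub>2\<close> modulo \<open>r\<^sub>1\<close>) is \<open>1\<close>-periodic,
  i.e. independent of \<open>X\<^sub>2\<close>, modulo \<open>r\<^sub>1\<close>; symmetrically for \<open>Q\<^sub>2\<close>. This gives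
  \<open>check (restr Q) \<equiv> Q\<close>, while \<open>restr (check P) = P\<close> holds on the nose.\<close>

section \<open>Forward differences and Newton interpolation\<close>

definition forward_diff :: "'a::comm_ring_1 \<Rightarrow> 'a poly \<Rightarrow> 'a poly" where
  "forward_diff h p = pcompose p [:h, 1:] - p"

lemma poly_forward_diff [simp]: "poly (forward_diff h p) x = poly p (x + h) - poly p x"
  by (simp add: forward_diff_def poly_pcompose add.commute)

lemma forward_diff_const:
  fixes p :: "'a::idom poly"
  assumes "degree p = 0" shows "forward_diff h p = 0"
  using assms by (auto elim!: degree_eq_zeroE simp: forward_diff_def)

lemma degree_forward_diff_less:
  fixes p :: "'a::idom poly"
  assumes "degree p > 0" shows "degree (forward_diff h p) < degree p"
proof (rule degree_lessI)
  have "degree (pcompose p [:h, 1:]) = degree p" "lead_coeff (pcompose p [:h, 1:]) = lead_coeff p"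
    using lead_coeff_comp[of "[:h, 1:]" p] by (simp_all add: degree_pcompose)
  then show "\<forall>k\<ge>degree p. coeff (forward_diff h p) k = 0"
    by (auto simp: forward_diff_def le_less coeff_eq_0)
qed (use assms in simp)

lemma funpow_forward_diff_eq_0:
  fixes p :: "'a::idom poly"
  shows "degree p < n \<Longrightarrow> (forward_diff h ^^ n) p = 0"
proof (induction n arbitrary: p)
  case (Suc n)
  have "(forward_diff h ^^ Suc n) p = (forward_diff h ^^ n) (forward_diff h p)"
    by (simp add: funpow_Suc_right del: funpow.simps)
  moreover have "(forward_diff h ^^ n) 0 = 0"
    by (induction n) (simp_all add: forward_diff_def)
  ultimately show ?case
    using Suc degree_forward_diff_less[of p h] forward_diff_const[of p h] by fastforce
qed simp

lemma sum_binomial_pascal: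
  fixes a :: "nat \<Rightarrow> 'a::comm_ring_1"
  shows "(\<Sum>d\<le>x. of_nat (x choose d) * (a (Suc d) + a d)) =
         (\<Sum>d\<le>Suc x. of_nat (Suc x choose d) * a d)"
proof -
  have "(\<Sum>d\<le>Suc x. of_nat (Suc x choose d) * a d) =
      a 0 + (\<Sum>d\<le>x. of_nat (x choose d) * a (Suc d)) + (\<Sum>d\<le>x. of_nat (x choose Suc d) * a (Suc d))"
    by (simp add: sum.atMost_Suc_shift del: sum.atMost_Suc binomial_Suc_Suc)
       (simp add: binomial_Suc_Suc distrib_right sum.distrib)
  moreover have "(\<Sum>d\<le>x. of_nat (x choose d) * a d) = (\<Sum>d\<le>Suc x. of_nat (x choose d) * a d)"
    by (simp add: binomial_eq_0)
  moreover have "\<dots> = a 0 + (\<Sum>d\<le>x. of_nat (x choose Suc d) * a (Suc d))"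
    by (simp add: sum.atMost_Suc_shift del: sum.atMost_Suc)
  ultimately show ?thesis by (simp add: distrib_left sum.distrib)
qed

lemma poly_add_of_nat_eq_sum_binomial:
  fixes p :: "'a::comm_ring_1 poly"
  shows "poly p (y + of_nat x) = (\<Sum>d\<le>x. of_nat (x choose d) * poly ((forward_diff 1 ^^ d) p) y)"
proof (induction x arbitrary: y)
  case (Suc x)
  let ?a = "\<lambda>d. poly ((forward_diff 1 ^^ d) p) y"
  have "poly p (y + of_nat (Suc x)) = (\<Sum>d\<le>x. of_nat (x choose d) * poly ((forward_diff 1 ^^ d) p) (y + 1))"
    using Suc.IH[of "y + 1"] by (simp add: algebra_simps)
  also have "\<dots> = (\<Sum>d\<le>x. of_nat (x choose d) * (?a (Suc d) + ?a d))"
    by (intro sum.cong) simp_all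
  also have "\<dots> = (\<Sum>d\<le>Suc x. of_nat (Suc x choose d) * ?a d)"
    by (rule sum_binomial_pascal)
  finally show ?case .
qed simp

lemma poly_eqI_of_nat:
  fixes p q :: "'a::{idom,ring_char_0} poly"
  assumes "\<And>x. poly p (of_nat x) = poly q (of_nat x)"
  shows "p = q"
proof (rule ccontr)
  assume "p \<noteq> q"
  then have "finite {z. poly (p - q) z = 0}"
    by (intro poly_roots_finite) simp
  moreover have "range (of_nat :: nat \<Rightarrow> 'a) \<subseteq> {z. poly (p - q) z = 0}"
    using assms by auto
  ultimately show False
    using range_inj_infinite[OF inj_of_nat] finite_subset by blast
qed

lemma newton_expansion:
  fixes p :: "'a::{idom,ring_char_0} poly"
  assumes B: "\<And>d x. poly (B d) (of_nat x) = of_nat (x choose d)" and "degree p < N"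
  shows "p = (\<Sum>d<N. smult (poly ((forward_diff 1 ^^ d) p) 0) (B d))"
proof (rule poly_eqI_of_nat)
  fix x
  let ?a = "\<lambda>d. poly ((forward_diff 1 ^^ d) p) 0"
  have "poly p (of_nat x) = (\<Sum>d\<le>x. ?a d * of_nat (x choose d))"
    using poly_add_of_nat_eq_sum_binomial[of p 0 x] by (simp add: mult.commute)
  also have "\<dots> = (\<Sum>d\<le>N + x. ?a d * of_nat (x choose d))"
    by (rule sum.mono_neutral_left) (auto simp: binomial_eq_0)
  also have "\<dots> = (\<Sum>d<N. ?a d * of_nat (x choose d))"
    using assms(2) by (intro sum.mono_neutral_right) (auto simp: funpow_forward_diff_eq_0)
  finally show "poly p (of_nat x) = poly (\<Sum>d<N. smult (?a d) (B d)) (of_nat x)"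
    by (simp add: poly_sum B)
qed

section \<open>Binomial polyfracts are the integer-valued polynomials\<close>

lemma gbinomial_of_int_in_Ints: "(of_int x :: 'a::field_char_0) gchoose d \<in> \<int>"
proof (cases "x \<ge> 0")
  case True
  then have "(of_int x :: 'a) gchoose d = of_nat (nat x choose d)"
    by (simp add: binomial_gbinomial)
  then show ?thesis by simp
next
  case False
  define m where "m = nat (- x)"
  have "(of_int x :: 'a) = - of_nat m" and "(of_nat m + of_nat d - 1 :: 'a) = of_nat (m + d - 1)"
    using False by (simp_all add: m_def of_nat_diff)
  then have "(of_int x :: 'a) gchoose d = (- 1) ^ d * of_nat ((m + d - 1) choose d)"
    by (simp add: gbinomial_minus binomial_gbinomial)
  then show ?thesis by simp
qed

lemma of_int_floor_in_Ints: "x \<in> \<int> \<Longrightarrow> of_int \<lfloor>x\<rfloor> = x"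
  by (elim Ints_cases) simp

lemma poly_binpoly: "poly (binpoly d) z = z gchoose d"
  by (simp add: binpoly_def gbinomial_prod_rev poly_prod atLeast0LessThan)

lemma poly_binpoly_of_nat: "poly (binpoly d) (of_nat x) = of_nat (x choose d)"
  by (simp add: poly_binpoly binomial_gbinomial)

lemma ev1_binpoly_in_Ints: "ev1 (binpoly d) x \<in> \<int>"
  by (simp add: ev1_def poly_binpoly gbinomial_of_int_in_Ints)

lemma ev1_add [simp]: "ev1 (f + g) x = ev1 f x + ev1 g x"
  and ev1_diff [simp]: "ev1 (f - g) x = ev1 f x - ev1 g x"
  and ev1_mult [simp]: "ev1 (f * g) x = ev1 f x * ev1 g x"
  and ev1_smult [simp]: "ev1 (smult c f) x = c * ev1 f x"
  and ev1_sum: "ev1 (sum u A) x = (\<Sum>a\<in>A. ev1 (u a) x)"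
  and ev1_forward_diff: "ev1 (forward_diff (of_int h) f) x = ev1 f (x + h) - ev1 f x"
  by (simp_all add: ev1_def poly_sum)

lemma ev2_add [simp]: "ev2 (F + G) x1 x2 = ev2 F x1 x2 + ev2 G x1 x2"
  and ev2_diff [simp]: "ev2 (F - G) x1 x2 = ev2 F x1 x2 - ev2 G x1 x2"
  and ev2_mult [simp]: "ev2 (F * G) x1 x2 = ev2 F x1 x2 * ev2 G x1 x2"
  and ev2_smult [simp]: "ev2 (smult p F) x1 x2 = ev1 p x1 * ev2 F x1 x2"
  and ev2_sum: "ev2 (sum H A) x1 x2 = (\<Sum>a\<in>A. ev2 (H a) x1 x2)"
  and ev2_forward_diff: "ev2 (forward_diff 1 F) x1 x2 = ev2 F x1 (x2 + 1) - ev2 F x1 x2"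
  by (simp_all add: ev2_def ev1_def poly_sum one_pCons)

lemma ev2_const [simp]: "ev2 [:f:] x1 x2 = ev1 f x1"
  by (simp add: ev2_def ev1_def)

lemma ev2_map_poly_const [simp]: "ev2 (map_poly (\<lambda>u. [:u:]) f) x1 x2 = ev1 f x2"
  by (simp add: ev2_def ev1_def pcompose_altdef[symmetric] poly_pcompose)

lemma ev2_binpoly2: "ev2 (binpoly2 a b) x1 x2 = ev1 (binpoly a) x1 * ev1 (binpoly b) x2"
  by (simp add: binpoly2_def)

definition int_valued1 :: "rat poly \<Rightarrow> bool" where
  "int_valued1 f \<longleftrightarrow> (\<forall>x. ev1 f x \<in> \<int>)"

definition int_valued2 :: "rat poly poly \<Rightarrow> bool" where
  "int_valued2 F \<longleftrightarrow> (\<forall>x1 x2. ev2 F x1 x2 \<in> \<int>)"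

lemma int_valued1_funpow_forward_diff: "int_valued1 f \<Longrightarrow> int_valued1 ((forward_diff 1 ^^ d) f)"
  using ev1_forward_diff[of 1] by (induction d) (simp_all add: int_valued1_def)

lemma int_valued2_funpow_forward_diff: "int_valued2 F \<Longrightarrow> int_valued2 ((forward_diff 1 ^^ d) F)"
  by (induction d) (auto simp: int_valued2_def ev2_forward_diff)

lemma Zbinom1_imp_int_valued1: "f \<in> Zbinom1 \<Longrightarrow> int_valued1 f"
  by (auto simp: Zbinom1_def int_valued1_def ev1_sum ev1_binpoly_in_Ints intro!: Ints_sum Ints_mult)

lemma int_valued1_binomial_expansion:
  assumes "int_valued1 f" and "degree f < N"
  shows "f = (\<Sum>d<N. smult (of_int \<lfloor>poly ((forward_diff 1 ^^ d) f) 0\<rfloor>) (binpoly d))"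
proof -
  have "poly ((forward_diff 1 ^^ d) f) 0 \<in> \<int>" for d
    using int_valued1_funpow_forward_diff[OF assms(1), of d] unfolding int_valued1_def ev1_def
    by (metis of_int_0)
  then show ?thesis
    using newton_expansion[OF poly_binpoly_of_nat assms(2)] by (simp add: of_int_floor_in_Ints)
qed

lemma Zbinom1_iff_int_valued1: "f \<in> Zbinom1 \<longleftrightarrow> int_valued1 f"
  using Zbinom1_imp_int_valued1 int_valued1_binomial_expansion[of f "Suc (degree f)"]
  unfolding Zbinom1_def mem_Collect_eq by (metis lessI)

lemma Zbinom2_imp_int_valued2: "F \<in> Zbinom2 \<Longrightarrow> int_valued2 F"
  unfolding Zbinom2_def int_valued2_def
  by (clarsimp simp: ev2_sum ev2_binpoly2) (simp add: ev1_def Ints_sum Ints_mult ev1_binpoly_in_Ints[unfolded ev1_def])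

lemma int_valued2_imp_Zbinom2:
  assumes "int_valued2 F"
  shows "F \<in> Zbinom2"
proof -
  let ?B = "\<lambda>b. map_poly (\<lambda>u. [:u:]) (binpoly b)"
  let ?C = "\<lambda>b. poly ((forward_diff 1 ^^ b) F) 0"
  define N where "N = Suc (max (degree F) (Max ((\<lambda>b. degree (?C b)) ` {..degree F})))"
  define c where "c a b = \<lfloor>poly ((forward_diff 1 ^^ a) (?C b)) 0\<rfloor>" for a b
  have "poly (?B b) (of_nat x) = of_nat (x choose b)" for b x
    by (simp add: pcompose_altdef[symmetric] of_nat_poly pcompose_pCons_0 poly_binpoly_of_nat)
  then have F: "F = (\<Sum>b<N. smult (?C b) (?B b))"
    by (rule newton_expansion) (simp add: N_def)
  have "ev1 (?C b) x = ev2 ((forward_diff 1 ^^ b) F) x 0" for b x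
    by (simp add: ev1_def ev2_def)
  then have "int_valued1 (?C b)" for b
    using int_valued2_funpow_forward_diff[OF assms] by (simp add: int_valued1_def int_valued2_def)
  moreover have "degree (?C b) < N" for b
  proof (cases "b \<le> degree F")
    case True
    then show ?thesis by (simp add: N_def le_max_iff_disj less_Suc_eq_le)
  next
    case False
    then show ?thesis by (simp add: funpow_forward_diff_eq_0 N_def)
  qed
  ultimately have C: "?C b = (\<Sum>a<N. smult (of_int (c a b)) (binpoly a))" for b
    unfolding c_def by (rule int_valued1_binomial_expansion)
  have "smult (smult k p) (?B b) = smult [:k:] ([:p:] * ?B b)" for k p b
    by (rule poly_eqI) (simp add: mult.assoc)
  then have "F = (\<Sum>b<N. \<Sum>a<N. smult [:of_int (c a b):] (binpoly2 a b))"
    by (subst F) (simp add: C smult_sum binpoly2_def)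
  also have "\<dots> = (\<Sum>a<N. \<Sum>b<N. smult [:of_int (c a b):] (binpoly2 a b))"
    by (rule sum.swap)
  finally show ?thesis
    unfolding Zbinom2_def by blast
qed

lemma Zbinom2_iff_int_valued2: "F \<in> Zbinom2 \<longleftrightarrow> int_valued2 F"
  using Zbinom2_imp_int_valued2 int_valued2_imp_Zbinom2 by blast

section \<open>Periodicity modulo \<open>r\<close>\<close>

definition forward_diff_fun :: "int \<Rightarrow> (int \<Rightarrow> int) \<Rightarrow> int \<Rightarrow> int" where
  "forward_diff_fun h \<phi> x = \<phi> (x + h) - \<phi> x"

lemma cong_periodic_multiple:
  fixes \<phi> :: "int \<Rightarrow> int"
  assumes "\<And>y. [\<phi> (y + h) = \<phi> y] (mod r)"
  shows "[\<phi> (x + int i * h) = \<phi> x] (mod r)"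
proof (induction i)
  case (Suc i)
  have "[\<phi> ((x + int i * h) + h) = \<phi> (x + int i * h)] (mod r)"
    by (rule assms)
  then show ?case
    using Suc.IH by (simp add: algebra_simps cong_trans)
qed simp

text \<open>By induction on the nilpotency order, \<open>\<Delta>\<^sub>h \<phi>\<close> is \<open>h\<close>-periodic modulo \<open>r\<close>, so
  telescoping gives \<open>\<phi> (x + M h) - \<phi> x \<equiv> M \<Delta>\<^sub>h \<phi> x\<close>; the left side is \<open>\<equiv> 0\<close> and \<open>M\<close> is
  a unit modulo \<open>r\<close>, so \<open>\<Delta>\<^sub>h \<phi> \<equiv> 0\<close>.\<close>
lemma cong_periodic_coprime_factor:
  fixes \<phi> :: "int \<Rightarrow> int"
  assumes "coprime (int M) r"
  shows "(forward_diff_fun h ^^ n) \<phi> = (\<lambda>_. 0) \<Longrightarrow> \<forall>x. [\<phi> (x + int M * h) = \<phi> x] (mod r)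
    \<Longrightarrow> [\<phi> (x + h) = \<phi> x] (mod r)"
proof (induction n arbitrary: \<phi> x)
  case (Suc n)
  define \<psi> where "\<psi> = forward_diff_fun h \<phi>"
  have "(forward_diff_fun h ^^ n) \<psi> = (\<lambda>_. 0)"
    using Suc.prems(1) by (simp add: \<psi>_def funpow_Suc_right del: funpow.simps)
  moreover have "\<forall>y. [\<psi> (y + int M * h) = \<psi> y] (mod r)"
  proof
    fix y
    have "[\<phi> ((y + h) + int M * h) - \<phi> (y + int M * h) = \<phi> (y + h) - \<phi> y] (mod r)"
      using Suc.prems(2) by (intro cong_diff) blast+
    then show "[\<psi> (y + int M * h) = \<psi> y] (mod r)"
      by (simp add: \<psi>_def forward_diff_fun_def algebra_simps)
  qed
  ultimately have \<psi>_periodic: "[\<psi> (y + h) = \<psi> y] (mod r)" for y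
    using Suc.IH by blast
  have "\<phi> (x + int M * h) - \<phi> x = (\<Sum>i<M. \<psi> (x + int i * h))"
    using sum_lessThan_telescope[of "\<lambda>i. \<phi> (x + int i * h)" M]
    by (simp add: \<psi>_def forward_diff_fun_def algebra_simps)
  also have "[\<dots> = (\<Sum>i<M. \<psi> x)] (mod r)"
    by (intro cong_sum cong_periodic_multiple \<psi>_periodic)
  finally have "[\<phi> (x + int M * h) - \<phi> x = int M * \<psi> x] (mod r)"
    by simp
  moreover have "[\<phi> (x + int M * h) - \<phi> x = 0] (mod r)"
    using Suc.prems(2) cong_diff_iff_cong_0 by blast
  ultimately have "[int M * \<psi> x = int M * 0] (mod r)"
    by (metis cong_sym cong_trans mult_zero_right)
  then have "[\<psi> x = 0] (mod r)"
    using assms cong_mult_lcancel by blast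
  then show ?case
    by (simp add: \<psi>_def forward_diff_fun_def cong_diff_iff_cong_0)
qed simp

lemma vcong_refl [simp]: "vcong r a a"
  by (simp add: vcong_def)

lemma vcong_sym: "vcong r a b \<Longrightarrow> vcong r b a"
proof -
  have "(b - a) / of_int r = - ((a - b) / of_int r)"
    by (metis minus_diff_eq minus_divide_left)
  then show "vcong r a b \<Longrightarrow> vcong r b a"
    unfolding vcong_def by (metis Ints_minus)
qed

lemma vcong_trans: "vcong r a b \<Longrightarrow> vcong r b c \<Longrightarrow> vcong r a c"
proof -
  have "(a - c) / of_int r = (a - b) / of_int r + (b - c) / of_int r"
    by (simp add: diff_divide_distrib)
  then show "vcong r a b \<Longrightarrow> vcong r b c \<Longrightarrow> vcong r a c"
    unfolding vcong_def by (metis Ints_add)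
qed

lemma vcong_of_int_iff:
  assumes "r \<noteq> 0"
  shows "vcong r (of_int a) (of_int b) \<longleftrightarrow> [a = b] (mod r)"
proof
  assume "vcong r (of_int a) (of_int b)"
  then obtain k where "(of_int a - of_int b) / (of_int r :: rat) = of_int k"
    unfolding vcong_def by (auto elim: Ints_cases)
  then have "a - b = k * r"
    using assms by (simp add: field_simps flip: of_int_diff of_int_mult)
  then show "[a = b] (mod r)"
    by (simp add: cong_iff_dvd_diff)
next
  assume "[a = b] (mod r)"
  then show "vcong r (of_int a) (of_int b)"
    unfolding vcong_def cong_iff_dvd_diff by (metis of_int_diff of_int_divide_in_Ints)
qed

lemma vcong_periodic_mod_eq:
  fixes g :: "int \<Rightarrow> rat"
  assumes periodic: "\<And>z. vcong r (g (z + q)) (g z)" and "x mod q = y mod q"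
  shows "vcong r (g x) (g y)"
proof -
  have multiple: "vcong r (g (z + int n * q)) (g z)" for z n
  proof (induction n)
    case (Suc n)
    have shift: "z + int (Suc n) * q = (z + int n * q) + q"
      by (simp add: algebra_simps)
    show ?case
      unfolding shift by (rule vcong_trans[OF periodic Suc.IH])
  qed simp
  define k where "k = (x - y) div q"
  have x: "x = y + k * q"
    using assms(2) by (simp add: k_def mod_eq_dvd_iff)
  show ?thesis
  proof (cases "k \<ge> 0")
    case True
    then show ?thesis using multiple[of y "nat k"] x by simp
  next
    case False
    then have "y = x + int (nat (- k)) * q"
      using x by simp
    then have "vcong r (g y) (g x)"
      using multiple[of x "nat (- k)"] by simp
    then show ?thesis by (rule vcong_sym)
  qed
qed

lemma per1_vcong: "per1 r q f \<Longrightarrow> x mod q = y mod q \<Longrightarrow> vcong r (ev1 f x) (ev1 f y)"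
  unfolding per1_def by (rule vcong_periodic_mod_eq[where g = "ev1 f"]) simp_all

lemma per2_vcong:
  assumes "per2 r q1 q2 F" "x1 mod q1 = y1 mod q1" "x2 mod q2 = y2 mod q2"
  shows "vcong r (ev2 F x1 x2) (ev2 F y1 y2)"
proof (rule vcong_trans)
  show "vcong r (ev2 F x1 x2) (ev2 F y1 x2)"
    by (rule vcong_periodic_mod_eq[where g = "\<lambda>z. ev2 F z x2" and q = q1])
      (use assms in \<open>simp_all add: per2_def\<close>)
  show "vcong r (ev2 F y1 x2) (ev2 F y1 y2)"
    by (rule vcong_periodic_mod_eq[where g = "ev2 F y1" and q = q2])
      (use assms in \<open>simp_all add: per2_def\<close>)
qed

lemma per1_coprime_factor:
  assumes "int_valued1 f" "r \<noteq> 0" "0 < m" "coprime m r" "per1 r (m * h) f"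
  shows "per1 r h f"
proof -
  define \<phi> where "\<phi> x = \<lfloor>ev1 f x\<rfloor>" for x
  have \<phi>: "ev1 f x = of_int (\<phi> x)" for x
    using assms(1) by (simp add: \<phi>_def int_valued1_def of_int_floor_in_Ints)
  have diff_values: "of_int ((forward_diff_fun h ^^ n) \<phi> x) = poly ((forward_diff (of_int h) ^^ n) f) (of_int x)"
    for n x
    by (induction n arbitrary: x) (simp_all add: forward_diff_fun_def \<phi>[unfolded ev1_def])
  have "coprime (int (nat m)) r"
    using assms(3,4) by simp
  moreover from diff_values[of "Suc (degree f)"] have "(forward_diff_fun h ^^ Suc (degree f)) \<phi> = (\<lambda>_. 0)"
    by (simp add: funpow_forward_diff_eq_0 fun_eq_iff del: funpow.simps)
  moreover have "\<forall>x. [\<phi> (x + int (nat m) * h) = \<phi> x] (mod r)"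
    using assms(3,5) by (simp add: per1_def \<phi> vcong_of_int_iff[OF assms(2)])
  ultimately have "[\<phi> (x + h) = \<phi> x] (mod r)" for x
    by (rule cong_periodic_coprime_factor)
  then show ?thesis
    by (simp add: per1_def \<phi> vcong_of_int_iff[OF assms(2)])
qed

section \<open>The maps \<open>check\<close> and \<open>restr\<close>\<close>

lemma cong1_iff_vcong: "cong1 r f g \<longleftrightarrow> (\<forall>x. vcong r (ev1 f x) (ev1 g x))"
  by (simp add: cong1_def Zbinom1_iff_int_valued1 int_valued1_def vcong_def)

lemma cong2_iff_vcong: "cong2 r F G \<longleftrightarrow> (\<forall>x1 x2. vcong r (ev2 F x1 x2) (ev2 G x1 x2))"
  by (simp add: cong2_def Zbinom2_iff_int_valued2 int_valued2_def vcong_def) (simp add: ev1_def)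

lemma Bcong1_refl: "Bcong1 r1 r2 P P"
  by (simp add: Bcong1_def cong1_iff_vcong)

lemma Bcong2_refl: "Bcong2 r1 r2 Q Q"
  by (simp add: Bcong2_def cong2_iff_vcong)

lemma dom1_iff: "P \<in> dom1 r1 r2 q \<longleftrightarrow>
    int_valued1 (fst P) \<and> int_valued1 (snd P) \<and> per1 r1 q (fst P) \<and> per1 r2 q (snd P)"
  by (cases P) (simp add: dom1_def Zbinom1_iff_int_valued1)

lemma dom2_iff: "Q \<in> dom2 r1 r2 q1 q2 \<longleftrightarrow>
    int_valued2 (fst Q) \<and> int_valued2 (snd Q) \<and> per2 r1 q1 q2 (fst Q) \<and> per2 r2 q1 q2 (snd Q)"
  by (cases Q) (simp add: dom2_def Zbinom2_iff_int_valued2)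

lemma ev1_restrict: "ev1 (poly F [:0, 1:]) x = ev2 F x x"
  by (induction F) (simp_all add: ev1_def ev2_def)

lemma ev2_eq_ev1_slice: "ev2 F x1 x2 = ev1 (map_poly (\<lambda>p. poly p (of_int x1)) F) x2"
  by (induction F) (simp_all add: ev1_def ev2_def map_poly_pCons)

lemma per2_vcong_const_snd:
  assumes "int_valued2 F" "per2 r q1 q2 F" "r \<noteq> 0" "0 < q2" "coprime q2 r"
  shows "vcong r (ev2 F x1 y) (ev2 F x1 x2)"
proof -
  define g where "g = map_poly (\<lambda>p. poly p (of_int x1)) F"
  have ev: "ev2 F x1 z = ev1 g z" for z
    by (simp add: g_def ev2_eq_ev1_slice)
  have g: "int_valued1 g" "per1 r (q2 * 1) g"
    using assms(1,2) by (simp_all add: int_valued1_def int_valued2_def per1_def per2_def flip: ev)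
  from g(1) assms(3-5) g(2) have "per1 r 1 g"
    by (rule per1_coprime_factor)
  then show ?thesis
    unfolding ev by (rule per1_vcong) simp
qed

lemma per2_vcong_const_fst:
  assumes "int_valued2 F" "per2 r q1 q2 F" "r \<noteq> 0" "0 < q1" "coprime q1 r"
  shows "vcong r (ev2 F y x2) (ev2 F x1 x2)"
proof -
  define g where "g = poly F [:of_int x2:]"
  have ev: "ev2 F z x2 = ev1 g z" for z
    by (simp add: g_def ev1_def ev2_def)
  have g: "int_valued1 g" "per1 r (q1 * 1) g"
    using assms(1,2) by (simp_all add: int_valued1_def int_valued2_def per1_def per2_def flip: ev)
  from g(1) assms(3-5) g(2) have "per1 r 1 g"
    by (rule per1_coprime_factor)
  then show ?thesis
    unfolding ev by (rule per1_vcong) simp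
qed

lemma dom1_periodic_factors:
  assumes "P \<in> dom1 r1 r2 (q1 * q2)" "r1 \<noteq> 0" "r2 \<noteq> 0" "0 < q1" "0 < q2"
    and "coprime q2 r1" "coprime q1 r2"
  shows "per1 r1 q1 (fst P)" "per1 r2 q2 (snd P)"
  using assms per1_coprime_factor[of "fst P" r1 q2 q1] per1_coprime_factor[of "snd P" r2 q1 q2]
  by (simp_all add: dom1_iff mult.commute)

lemma check_in_dom2:
  assumes "P \<in> dom1 r1 r2 (q1 * q2)" "r1 \<noteq> 0" "r2 \<noteq> 0" "0 < q1" "0 < q2"
    and "coprime q2 r1" "coprime q1 r2"
  shows "check P \<in> dom2 r1 r2 q1 q2"
  using assms dom1_periodic_factors[OF assms]
  by (simp add: dom1_iff dom2_iff check_def per1_def per2_def int_valued1_def int_valued2_def)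

lemma restr_in_dom1:
  assumes "Q \<in> dom2 r1 r2 q1 q2"
  shows "restr Q \<in> dom1 r1 r2 (q1 * q2)"
proof -
  have "per1 r (q1 * q2) (poly F [:0, 1:])" if "per2 r q1 q2 F" for r F
    unfolding per1_def ev1_restrict using per2_vcong[OF that] by simp
  then show ?thesis
    using assms by (simp add: dom1_iff dom2_iff restr_def int_valued1_def int_valued2_def ev1_restrict)
qed

lemma Bcong2_check:
  "Bcong1 r1 r2 P P' \<Longrightarrow> Bcong2 r1 r2 (check P) (check P')"
  by (simp add: Bcong1_def Bcong2_def cong1_iff_vcong cong2_iff_vcong check_def)

lemma Bcong1_restr:
  "Bcong2 r1 r2 Q Q' \<Longrightarrow> Bcong1 r1 r2 (restr Q) (restr Q')"
  by (simp add: Bcong1_def Bcong2_def cong1_iff_vcong cong2_iff_vcong restr_def ev1_restrict)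

lemma Bcong2_check_padd: "Bcong2 r1 r2 (check (padd P P')) (padd (check P) (check P'))"
  by (simp add: Bcong2_def cong2_iff_vcong check_def padd_def)

lemma Bcong2_check_pmul: "Bcong2 r1 r2 (check (pmul P P')) (pmul (check P) (check P'))"
  by (simp add: Bcong2_def cong2_iff_vcong check_def pmul_def mult.commute)

lemma check_one: "check (1, 1) = (1, 1)"
  by (simp add: check_def map_poly_pCons one_pCons)

lemma restr_check: "restr (check P) = P"
  by (simp add: restr_def check_def pcompose_altdef[symmetric])

lemma Bcong2_check_restr:
  assumes "Q \<in> dom2 r1 r2 q1 q2" "r1 \<noteq> 0" "r2 \<noteq> 0" "0 < q1" "0 < q2"
    and "coprime q2 r1" "coprime q1 r2"
  shows "Bcong2 r1 r2 (check (restr Q)) Q"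
  using assms per2_vcong_const_snd[of "fst Q" r1 q1 q2] per2_vcong_const_fst[of "snd Q" r2 q1 q2]
  by (simp add: Bcong2_def cong2_iff_vcong check_def restr_def ev1_restrict dom2_iff)

lemma ev2_check_vcong_ev1:
  assumes "P \<in> dom1 r1 r2 (q1 * q2)" "r1 \<noteq> 0" "r2 \<noteq> 0" "0 < q1" "0 < q2"
    and "coprime q2 r1" "coprime q1 r2"
    and "x mod q1 = x1 mod q1" "x mod q2 = x2 mod q2"
  shows "vcong r1 (ev2 (fst (check P)) x1 x2) (ev1 (fst P) x)"
    and "vcong r2 (ev2 (snd (check P)) x1 x2) (ev1 (snd P) x)"
  using dom1_periodic_factors[OF assms(1-7)] assms(8,9)
  by (simp_all add: check_def per1_vcong)

lemma ev1_restr_vcong_ev2: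
  assumes "Q \<in> dom2 r1 r2 q1 q2" "x mod q1 = x1 mod q1" "x mod q2 = x2 mod q2"
  shows "vcong r1 (ev1 (fst (restr Q)) x) (ev2 (fst Q) x1 x2)"
    and "vcong r2 (ev1 (snd (restr Q)) x) (ev2 (snd Q) x1 x2)"
  using per2_vcong[OF _ assms(2,3)] assms(1) by (simp_all add: restr_def ev1_restrict dom2_iff)

theorem theorem3p16:
  fixes r1 r2 q1 q2 :: int
  assumes "r1 \<ge> 2" and "r2 \<ge> 2" and "q1 \<ge> 1" and "q2 \<ge> 1"
    and "gcd q1 r2 = 1" and "gcd q2 r1 = 1"
  shows
    "(\<forall>P \<in> dom1 r1 r2 (q1 * q2). check P \<in> dom2 r1 r2 q1 q2)
   \<and> (\<forall>Q \<in> dom2 r1 r2 q1 q2. restr Q \<in> dom1 r1 r2 (q1 * q2))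
   \<and> (\<forall>P \<in> dom1 r1 r2 (q1 * q2). \<forall>P' \<in> dom1 r1 r2 (q1 * q2).
        Bcong1 r1 r2 P P' \<longrightarrow> Bcong2 r1 r2 (check P) (check P'))
   \<and> (\<forall>Q \<in> dom2 r1 r2 q1 q2. \<forall>Q' \<in> dom2 r1 r2 q1 q2.
        Bcong2 r1 r2 Q Q' \<longrightarrow> Bcong1 r1 r2 (restr Q) (restr Q'))
   \<and> (\<forall>P \<in> dom1 r1 r2 (q1 * q2). \<forall>P' \<in> dom1 r1 r2 (q1 * q2).
        Bcong2 r1 r2 (check (padd P P')) (padd (check P) (check P'))
      \<and> Bcong2 r1 r2 (check (pmul P P')) (pmul (check P) (check P')))
   \<and> Bcong2 r1 r2 (check (1, 1)) (1, 1)
   \<and> (\<forall>P \<in> dom1 r1 r2 (q1 * q2). Bcong1 r1 r2 (restr (check P)) P)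
   \<and> (\<forall>Q \<in> dom2 r1 r2 q1 q2. Bcong2 r1 r2 (check (restr Q)) Q)
   \<and> (gcd q1 q2 = 1 \<longrightarrow>
        (\<forall>P \<in> dom1 r1 r2 (q1 * q2). \<forall>x x1 x2.
           x mod q1 = x1 mod q1 \<and> x mod q2 = x2 mod q2 \<longrightarrow>
             vcong r1 (ev2 (fst (check P)) x1 x2) (ev1 (fst P) x)
           \<and> vcong r2 (ev2 (snd (check P)) x1 x2) (ev1 (snd P) x))
      \<and> (\<forall>Q \<in> dom2 r1 r2 q1 q2. \<forall>x x1 x2.
           x mod q1 = x1 mod q1 \<and> x mod q2 = x2 mod q2 \<longrightarrow>
             vcong r1 (ev1 (fst (restr Q)) x) (ev2 (fst Q) x1 x2)
           \<and> vcong r2 (ev1 (snd (restr Q)) x) (ev2 (snd Q) x1 x2)))"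
proof -
  have r: "r1 \<noteq> 0" "r2 \<noteq> 0" and q: "0 < q1" "0 < q2" and cop: "coprime q2 r1" "coprime q1 r2"
    using assms by (simp_all add: coprime_iff_gcd_eq_1 gcd.commute)
  show ?thesis
    using check_in_dom2[OF _ r q cop] ev2_check_vcong_ev1[OF _ r q cop]
      restr_in_dom1 Bcong2_check_restr[OF _ r q cop] ev1_restr_vcong_ev2
    by (simp add: Bcong2_check Bcong1_restr Bcong2_check_padd Bcong2_check_pmul check_one
        restr_check Bcong1_refl Bcong2_refl)
qed

end
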